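(* Let $\mathbf P=(P_s)_{s\in\mathrm{SEQ}}$ and $\mathbf Q=(Q_s)_{s\in\mathrm{SEQ}}$ be normal Suslin schemes on $C$ consisting of $\mathbf m$-measurable sets, such that $\mathbf A(\mathbf P)$, $\mathbf A(\mathbf Q)$ and all $\mathbf A_f(\mathbf P)$, $\mathbf A_f(\mathbf Q)$ are measurable, and such that $\mathbf m(P_s\triangle Q_s)=0$ for all $s\in\mathrm{SEQ}$. Then $\mathbf m(\mathbf A(\mathbf P))=\mathbf m(\mathbf A(\mathbf Q))$.
   Context: $C=\{0,1\}^{\mathbb N}$, $\mathbf m$ the completed uniform product measure; $\triangle$ is symmetric difference. $\mathrm{SEQ}$ is the set of finite sequences of naturals, $\bar g(n)=\langle g(0),\dots,g(n-1)\rangle$. A Suslin scheme is a map $s\mapsto P_s\subseteq C$; normal means $t$ extends $s$ implies $P_t\subseteq P_s$. $\mathbf A(\mathbf P)=\bigcup_{g\in\mathbb N^{\mathbb N}}\bigcap_n P_{\bar g(n)}$; $\mathbf A_f(\mathbf P)=\bigcup_{g\le f}\bigcap_n P_{\bar g(n)}$ with pointwise $\le$. *)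

theory Defs
  imports "HOL-Probability.Probability"
begin

definition coin_space :: "(nat \<Rightarrow> bool) measure" where
  "coin_space = Pi\<^sub>M UNIV (\<lambda>_::nat. measure_pmf (bernoulli_pmf (1/2)))"

definition mC :: "(nat \<Rightarrow> bool) measure" where
  "mC = completion coin_space"

definition bar :: "(nat \<Rightarrow> nat) \<Rightarrow> nat \<Rightarrow> nat list" where
  "bar g n = map g [0..<n]"

definition normal_scheme :: "(nat list \<Rightarrow> 'a set) \<Rightarrow> bool" where
  "normal_scheme P \<longleftrightarrow> (\<forall>s u. P (s @ u) \<subseteq> P s)"

definition suslinA :: "(nat list \<Rightarrow> 'a set) \<Rightarrow> 'a set" where
  "suslinA P = (\<Union>g. \<Inter>n. P (bar g n))"

definition suslinA_bdd :: "(nat \<Rightarrow> nat) \<Rightarrow> (nat list \<Rightarrow> 'a set) \<Rightarrow> 'a set" where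
  "suslinA_bdd f P = (\<Union>g\<in>{g. \<forall>k. g k \<le> f k}. \<Inter>n. P (bar g n))"

end

theory Submission
  imports Defs
begin

text \<open>Outside the countable union N of the null sets P s \<triangle> Q s the two schemes coincide, so
  A(P) and A(Q) differ only inside N and have the same measure.\<close>

lemma suslinA_diff_subset: "suslinA P - suslinA Q \<subseteq> (\<Union>s. P s - Q s)"
  unfolding suslinA_def by blast

lemma emeasure_eq_if_sym_diff_subset_null:
  assumes "A \<in> sets M" "B \<in> sets M" "N \<in> null_sets M"
    and "A - B \<subseteq> N" "B - A \<subseteq> N"
  shows "emeasure M A = emeasure M B"
proof -
  have "emeasure M A = emeasure M (A \<union> N)"
    using emeasure_Un_null_set[OF assms(1,3)] by simp
  also have "A \<union> N = B \<union> N"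
    using assms(4,5) by blast
  also have "emeasure M (B \<union> N) = emeasure M B"
    using emeasure_Un_null_set[OF assms(2,3)] by simp
  finally show ?thesis .
qed

theorem lemma5:
  fixes P Q :: "nat list \<Rightarrow> (nat \<Rightarrow> bool) set"
  assumes "normal_scheme P" and "normal_scheme Q"
    and "\<And>s. P s \<in> sets mC" and "\<And>s. Q s \<in> sets mC"
    and "suslinA P \<in> sets mC" and "suslinA Q \<in> sets mC"
    and "\<And>f. suslinA_bdd f P \<in> sets mC" and "\<And>f. suslinA_bdd f Q \<in> sets mC"
    and "\<And>s. emeasure mC ((P s - Q s) \<union> (Q s - P s)) = 0"
  shows "emeasure mC (suslinA P) = emeasure mC (suslinA Q)"
proof -
  define N where "N = (\<Union>s. (P s - Q s) \<union> (Q s - P s))"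
  have "\<And>s. (P s - Q s) \<union> (Q s - P s) \<in> null_sets mC"
    using assms(3,4,9) by (auto simp: null_sets_def)
  then have "N \<in> null_sets mC"
    unfolding N_def by (intro null_sets_UN)
  moreover have "suslinA P - suslinA Q \<subseteq> N" "suslinA Q - suslinA P \<subseteq> N"
    using suslinA_diff_subset[of P Q] suslinA_diff_subset[of Q P] unfolding N_def by blast+
  ultimately show ?thesis
    using emeasure_eq_if_sym_diff_subset_null[OF assms(5,6)] by blast
qed

end
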